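(* Let $G=(V,E)$ be a $k$-cozy graph and let $U\subseteq V$ have fewer than $k$ spines in total. Then for every color $c\in\{1,\dots,k\}$, the number of spines of $U$ of color $c$ is even.
   Context: An undirected graph $G$ is $k$-cozy if it is connected, $k$-regular, and equipped with a $1$-factorization, i.e., an assignment of colors from $\{1,\dots,k\}$ to its edges such that the $k$ edges incident at each vertex receive distinct colors. For $U\subseteq V$, a spine of $U$ is an edge with exactly one endpoint in $U$. *)

theory Defs
  imports Main
begin

definition simple_graph :: "'a set \<Rightarrow> 'a set set \<Rightarrow> bool" where
  "simple_graph V E \<longleftrightarrow> finite V \<and> (\<forall>e\<in>E. e \<subseteq> V \<and> card e = 2)"

definition incident_edges :: "'a set set \<Rightarrow> 'a \<Rightarrow> 'a set set" where
  "incident_edges E v = {e\<in>E. v \<in> e}"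

definition adj :: "'a set set \<Rightarrow> ('a \<times> 'a) set" where
  "adj E = {(u, v). {u, v} \<in> E}"

definition connected_graph :: "'a set \<Rightarrow> 'a set set \<Rightarrow> bool" where
  "connected_graph V E \<longleftrightarrow> V \<noteq> {} \<and> (\<forall>u\<in>V. \<forall>v\<in>V. (u, v) \<in> (adj E)\<^sup>*)"

definition regular :: "nat \<Rightarrow> 'a set \<Rightarrow> 'a set set \<Rightarrow> bool" where
  "regular k V E \<longleftrightarrow> (\<forall>v\<in>V. card (incident_edges E v) = k)"

definition one_factorization :: "nat \<Rightarrow> 'a set \<Rightarrow> 'a set set \<Rightarrow> ('a set \<Rightarrow> nat) \<Rightarrow> bool" where
  "one_factorization k V E col \<longleftrightarrow>
     (\<forall>e\<in>E. col e \<in> {1..k}) \<and> (\<forall>v\<in>V. inj_on col (incident_edges E v))"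

definition cozy :: "nat \<Rightarrow> 'a set \<Rightarrow> 'a set set \<Rightarrow> ('a set \<Rightarrow> nat) \<Rightarrow> bool" where
  "cozy k V E col \<longleftrightarrow> simple_graph V E \<and> connected_graph V E \<and> regular k V E
     \<and> one_factorization k V E col"

definition spines :: "'a set set \<Rightarrow> 'a set \<Rightarrow> 'a set set" where
  "spines E U = {e\<in>E. card (e \<inter> U) = 1}"

end

theory Submission
  imports Defs
begin

text \<open>Each colour class c is a perfect matching, so the edges of colour c partition U into
  pieces of size 1 (the spines of colour c) and 2; hence the number of spines of colour c has
  the parity of |U|, for every c. If it were odd for one colour it would be odd, hence
  positive, for all k colours, giving at least k spines.\<close>

definition perfect_matching :: "'a set \<Rightarrow> 'a set set \<Rightarrow> bool" where
  "perfect_matching V M \<longleftrightarrow> (\<forall>e\<in>M. e \<subseteq> V \<and> card e = 2) \<and> (\<forall>v\<in>V. \<exists>!e\<in>M. v \<in> e)"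

lemma simple_graph_finite_edges: "simple_graph V E \<Longrightarrow> finite E"
  unfolding simple_graph_def by (meson Pow_iff finite_Pow_iff finite_subset subsetI)

lemma perfect_matching_card_parity:
  assumes "finite V" and M: "perfect_matching V M" and "U \<subseteq> V"
  shows "even (card U) \<longleftrightarrow> even (card {e\<in>M. card (e \<inter> U) = 1})"
proof -
  have M_edges: "\<And>e. e \<in> M \<Longrightarrow> e \<subseteq> V \<and> card e = 2" using M by (simp add: perfect_matching_def)
  have "finite M" using \<open>finite V\<close> M_edges by (meson Pow_iff finite_Pow_iff finite_subset subsetI)
  have U_partition: "U = (\<Union>e\<in>M. e \<inter> U)"
    using M \<open>U \<subseteq> V\<close> unfolding perfect_matching_def by blast
  have "card U = (\<Sum>e\<in>M. card (e \<inter> U))"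
  proof (subst U_partition, rule card_UN_disjoint[OF \<open>finite M\<close>])
    show "\<forall>e\<in>M. finite (e \<inter> U)" using M_edges card.infinite by fastforce
    show "\<forall>e\<in>M. \<forall>e'\<in>M. e \<noteq> e' \<longrightarrow> e \<inter> U \<inter> (e' \<inter> U) = {}"
      using M \<open>U \<subseteq> V\<close> unfolding perfect_matching_def by blast
  qed
  then have "even (card U) \<longleftrightarrow> even (card {e\<in>M. odd (card (e \<inter> U))})"
    using even_sum_iff[OF \<open>finite M\<close>] by simp
  moreover have "{e\<in>M. odd (card (e \<inter> U))} = {e\<in>M. card (e \<inter> U) = 1}"
  proof -
    have "odd (card (e \<inter> U)) \<longleftrightarrow> card (e \<inter> U) = 1" if "e \<in> M" for e
    proof -
      have "card (e \<inter> U) \<le> 2"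
        using M_edges[OF that] card_mono[of e "e \<inter> U"] card.infinite by fastforce
      then show ?thesis by presburger
    qed
    then show ?thesis by blast
  qed
  ultimately show ?thesis by simp
qed

lemma cozy_colours_at_vertex:
  assumes "cozy k V E col" and "v \<in> V"
  shows "col ` incident_edges E v = {1..k}"
proof -
  have "col ` incident_edges E v \<subseteq> {1..k}"
    using assms(1) by (auto simp: cozy_def one_factorization_def incident_edges_def)
  moreover have "inj_on col (incident_edges E v)" and "card (incident_edges E v) = k"
    using assms by (simp_all add: cozy_def one_factorization_def regular_def)
  then have "card (col ` incident_edges E v) = k" by (simp add: card_image)
  ultimately show ?thesis by (simp add: card_subset_eq)
qed

lemma cozy_colour_class_perfect_matching:
  assumes cz: "cozy k V E col" and "c \<in> {1..k}"
  shows "perfect_matching V {e\<in>E. col e = c}"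
proof -
  have "\<forall>e\<in>E. e \<subseteq> V \<and> card e = 2" using cz by (simp add: cozy_def simple_graph_def)
  moreover have "\<exists>!e\<in>{e\<in>E. col e = c}. v \<in> e" if v: "v \<in> V" for v
  proof -
    obtain e where e: "e \<in> incident_edges E v" "col e = c"
      using cozy_colours_at_vertex[OF cz v] \<open>c \<in> {1..k}\<close> by (metis imageE)
    have "inj_on col (incident_edges E v)"
      using cz v by (simp add: cozy_def one_factorization_def)
    then have "e' = e" if "e' \<in> E" "col e' = c" "v \<in> e'" for e'
      using e that by (simp add: incident_edges_def inj_on_def)
    with e show ?thesis by (auto simp: incident_edges_def)
  qed
  ultimately show ?thesis by (simp add: perfect_matching_def)
qed

lemma cozy_colour_spines_parity:
  assumes cz: "cozy k V E col" and "U \<subseteq> V" and "c \<in> {1..k}"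
  shows "even (card U) \<longleftrightarrow> even (card {e\<in>spines E U. col e = c})"
proof -
  have "finite V" using cz by (simp add: cozy_def simple_graph_def)
  have "{e\<in>spines E U. col e = c} = {e\<in>{e\<in>E. col e = c}. card (e \<inter> U) = 1}"
    by (auto simp: spines_def)
  then show ?thesis
    using perfect_matching_card_parity[OF \<open>finite V\<close> cozy_colour_class_perfect_matching[OF assms(1,3)]
        \<open>U \<subseteq> V\<close>] by simp
qed

theorem mainTheorem10:
  fixes V :: "'a set" and E :: "'a set set" and col :: "'a set \<Rightarrow> nat" and k :: nat and U :: "'a set"
  assumes "cozy k V E col"
    and "U \<subseteq> V"
    and "card (spines E U) < k"
  shows "\<forall>c\<in>{1..k}. even (card {e\<in>spines E U. col e = c})"
proof (rule ccontr)
  assume "\<not> ?thesis"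
  then have "odd (card U)"
    using cozy_colour_spines_parity[OF assms(1,2)] by auto
  have colours_used: "{1..k} \<subseteq> col ` spines E U"
  proof
    fix c assume "c \<in> {1..k}"
    then have "odd (card {e\<in>spines E U. col e = c})"
      using cozy_colour_spines_parity[OF assms(1,2)] \<open>odd (card U)\<close> by blast
    then have "{e\<in>spines E U. col e = c} \<noteq> {}" by (metis card.empty even_zero)
    then show "c \<in> col ` spines E U" by blast
  qed
  have "finite E"
    using assms(1) simple_graph_finite_edges unfolding cozy_def by blast
  then have "finite (spines E U)" by (simp add: spines_def)
  have "k = card {1..k}" by simp
  also have "\<dots> \<le> card (col ` spines E U)"
    using colours_used \<open>finite (spines E U)\<close> by (intro card_mono finite_imageI)
  also have "\<dots> \<le> card (spines E U)" by (rule card_image_le) fact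
  finally have "k \<le> card (spines E U)" .
  with assms(3) show False by simp
qed

end
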